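(* Let $\eta > 0$, let $\mathrm{smax}_\eta(z) = \eta \ln\left(\sum_{j=1}^m e^{z_j/\eta}\right)$ for $z \in \mathbb{R}^m_+$, and let $\nabla \mathrm{smax}_\eta$ denote its gradient. Let $A \in \mathbb{R}^{m \times n}_+$ and $x \in \mathbb{R}^n_+$ with $\|A x\|_\infty \le 1$. Let $M$ be an $n\times n$ diagonal matrix with $M \preceq I$, let $d = \eta M x$, and suppose $\frac{1}{\eta}\|A d\|_\infty \le 1/2$. Then $$\mathrm{smax}_\eta(A(x+d)) \le \mathrm{smax}_\eta(Ax) + \eta \left\langle A^\top \nabla \mathrm{smax}_\eta(Ax),\; M x + M^2 x \right\rangle.$$ Furthermore, given $\lambda \in \mathbb{R}_+$ and $c \in \mathbb{R}^n_+$, if $M$ is the diagonal matrix with $$M_{ii} = \left(1 - \lambda \cdot \frac{(A^\top \nabla \mathrm{smax}_\eta(Ax))_i}{c_i}\right) \vee 0,$$ then, with $d = \eta M x$, $$\frac{\mathrm{smax}_\eta(A(x+d)) - \mathrm{smax}_\eta(Ax)}{\langle c, d\rangle} \le \frac{1}{\lambda}.$$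
   Context: $\mathrm{smax}_\eta$ is the softmax function with parameter $\eta$; its gradient has entries $\nabla_j \mathrm{smax}_\eta(z) = e^{z_j/\eta}/\sum_{\ell} e^{z_\ell/\eta}$. $a \vee b$ denotes $\max\{a,b\}$. $M \preceq I$ means $I - M$ is positive semidefinite. This corollary follows from the following lemma: for $x, d \in \mathbb{R}^n_+$ and $A \in \mathbb{R}^{m\times n}_+$ with $\frac{1}{\eta}\|Ad\|_\infty \le 1/2$, $\mathrm{smax}_\eta(A(x+d)) \le \mathrm{smax}_\eta(Ax) + \langle A^\top \nabla \mathrm{smax}_\eta(Ax),\, d + \|Ax\|_\infty \cdot \frac{1}{\eta} \cdot D(x)^\dagger (d \circ d)\rangle$, where $D(x)^\dagger$ is the diagonal matrix with entries $1/x_i$ for $x_i \ne 0$ and $0$ otherwise, and $\circ$ is the coordinatewise product. *)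

theory Defs
  imports "HOL-Analysis.Analysis"
begin

definition smax :: "real \<Rightarrow> real^'m \<Rightarrow> real" where
  "smax \<eta> z = \<eta> * ln (\<Sum>j\<in>UNIV. exp (z $ j / \<eta>))"

definition grad_smax :: "real \<Rightarrow> real^'m \<Rightarrow> real^'m" where
  "grad_smax \<eta> z = (\<chi> j. exp (z $ j / \<eta>) / (\<Sum>l\<in>UNIV. exp (z $ l / \<eta>)))"

definition is_diag :: "real^'n^'n \<Rightarrow> bool" where
  "is_diag M \<longleftrightarrow> (\<forall>i j. i \<noteq> j \<longrightarrow> M $ i $ j = 0)"

definition loewner_le :: "real^'n^'n \<Rightarrow> real^'n^'n \<Rightarrow> bool" where
  "loewner_le M N \<longleftrightarrow> (\<forall>v. 0 \<le> v \<bullet> ((N - M) *v v))"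

end

theory Submission
  imports Defs
begin

text \<open>
  Since \<open>exp t \<le> 1 + t + t\<^sup>2\<close> for \<open>t \<le> 1\<close> and \<open>ln y \<le> y - 1\<close>, a shift \<open>w\<close> with
  \<open>w\<^sub>j \<le> \<eta>\<close> raises \<open>smax\<^sub>\<eta>\<close> by at most \<open>\<langle>\<nabla>smax\<^sub>\<eta>(z), w + w \<circ> w / \<eta>\<rangle>\<close>.
  For \<open>d = \<eta> M x\<close> with \<open>M\<close> diagonal, \<open>(A d)\<^sub>j / \<eta> = \<Sigma>\<^sub>i A\<^sub>j\<^sub>i x\<^sub>i M\<^sub>i\<^sub>i\<close> is a mean of the \<open>M\<^sub>i\<^sub>i\<close>
  with total weight \<open>(A x)\<^sub>j \<le> 1\<close>, so by Cauchy-Schwarz its square is at most \<open>(A M\<^sup>2 x)\<^sub>j\<close>;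
  this gives the first bound. For the second, put \<open>t\<^sub>i = \<lambda> g\<^sub>i / c\<^sub>i\<close> with
  \<open>g = A\<^sup>T \<nabla>smax\<^sub>\<eta>(A x)\<close>; then \<open>M\<^sub>i\<^sub>i = max (1 - t\<^sub>i) 0\<close> satisfies
  \<open>t\<^sub>i (M\<^sub>i\<^sub>i + M\<^sub>i\<^sub>i\<^sup>2) \<le> M\<^sub>i\<^sub>i\<close>, i.e. \<open>g\<^sub>i (M\<^sub>i\<^sub>i + M\<^sub>i\<^sub>i\<^sup>2) \<le> c\<^sub>i M\<^sub>i\<^sub>i / \<lambda>\<close>, because
  \<open>t (1 - t) (2 - t) = (1 - t) - (1 - t)\<^sup>3\<close>.
\<close>

lemma exp_le_one_plus_self_plus_square:
  fixes t :: real
  assumes "t \<le> 1"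
  shows "exp t \<le> 1 + t + t\<^sup>2"
proof (cases "t \<ge> 0")
  case True
  then show ?thesis using exp_bound assms by simp
next
  case False
  define s where "s = - t"
  have s: "0 \<le> s" using False s_def by simp
  have "exp t = 1 / exp s" by (simp add: s_def exp_minus field_simps)
  also have "\<dots> \<le> 1 / (1 + s)"
    using s by (intro divide_left_mono) auto
  also have "\<dots> \<le> 1 - s + s\<^sup>2"
    \<comment> \<open>\<open>(1 + s) (1 - s + s\<^sup>2) = 1 + s\<^sup>3\<close>\<close>
    using s by (simp add: field_simps power2_eq_square)
  finally show ?thesis by (simp add: s_def)
qed

lemma sum_grad_smax: "(\<Sum>j\<in>UNIV. grad_smax \<eta> z $ j) = 1"
proof -
  have "(\<Sum>l\<in>UNIV. exp (z $ l / \<eta>)) > 0" by (intro sum_pos) auto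
  then show ?thesis by (simp add: grad_smax_def flip: sum_divide_distrib)
qed

lemma grad_smax_pos: "0 < grad_smax \<eta> z $ j"
  unfolding grad_smax_def by (auto intro!: divide_pos_pos sum_pos)

lemma smax_add:
  "smax \<eta> (z + w) = smax \<eta> z + \<eta> * ln (\<Sum>j\<in>UNIV. grad_smax \<eta> z $ j * exp (w $ j / \<eta>))"
proof -
  define S where "S = (\<Sum>l\<in>UNIV. exp (z $ l / \<eta>))"
  have S: "S > 0" unfolding S_def by (intro sum_pos) auto
  have "(\<Sum>j\<in>UNIV. exp ((z + w) $ j / \<eta>)) = S * (\<Sum>j\<in>UNIV. grad_smax \<eta> z $ j * exp (w $ j / \<eta>))"
    using S by (simp add: S_def grad_smax_def sum_distrib_left add_divide_distrib exp_add)
  moreover have "(\<Sum>j\<in>UNIV. grad_smax \<eta> z $ j * exp (w $ j / \<eta>)) > 0"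
    by (intro sum_pos) (simp_all add: grad_smax_pos)
  ultimately show ?thesis
    using S by (simp add: smax_def S_def ln_mult distrib_left)
qed

lemma smax_add_le:
  fixes z w :: "real^'m"
  assumes "\<eta> > 0" and "\<And>j. w $ j \<le> \<eta>"
  shows "smax \<eta> (z + w) \<le> smax \<eta> z + grad_smax \<eta> z \<bullet> (w + (\<chi> j. (w $ j)\<^sup>2 / \<eta>))"
proof -
  define p where "p = grad_smax \<eta> z"
  define y where "y = (\<Sum>j\<in>UNIV. p $ j * exp (w $ j / \<eta>))"
  have "y > 0" unfolding y_def p_def
    by (intro sum_pos) (simp_all add: grad_smax_pos)
  have "ln y \<le> y - 1" using \<open>y > 0\<close> by (rule ln_le_minus_one)
  also have "\<dots> = (\<Sum>j\<in>UNIV. p $ j * (exp (w $ j / \<eta>) - 1))"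
    using sum_grad_smax[of \<eta> z] by (simp add: y_def p_def right_diff_distrib sum_subtractf)
  also have "\<dots> \<le> (\<Sum>j\<in>UNIV. p $ j * (w $ j / \<eta> + (w $ j / \<eta>)\<^sup>2))"
  proof (intro sum_mono mult_left_mono)
    fix j
    have "w $ j / \<eta> \<le> 1" using assms by simp
    then show "exp (w $ j / \<eta>) - 1 \<le> w $ j / \<eta> + (w $ j / \<eta>)\<^sup>2"
      using exp_le_one_plus_self_plus_square by fastforce
  qed (simp add: p_def grad_smax_pos less_imp_le)
  also have "\<dots> = (p \<bullet> (w + (\<chi> j. (w $ j)\<^sup>2 / \<eta>))) / \<eta>"
    using assms(1) by (simp add: inner_vec_def sum_divide_distrib power2_eq_square field_simps)
  finally show ?thesis
    using assms(1) by (simp add: smax_add p_def y_def pos_le_divide_eq mult.commute)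
qed

lemma matrix_vector_mult_component: "(A *v v) $ i = (\<Sum>j\<in>UNIV. A $ i $ j * v $ j)"
  by (simp add: matrix_vector_mult_def)

lemma is_diag_mult_vec: "is_diag M \<Longrightarrow> (M *v v) $ i = M $ i $ i * v $ i"
proof -
  assume "is_diag M"
  then have "(M *v v) $ i = (\<Sum>k\<in>UNIV. if k = i then M $ i $ i * v $ i else 0)"
    unfolding matrix_vector_mult_component by (intro sum.cong) (auto simp: is_diag_def)
  then show ?thesis by simp
qed

lemma weighted_square_le:
  fixes q m :: "'a \<Rightarrow> real"
  assumes "\<And>i. i \<in> I \<Longrightarrow> 0 \<le> q i" and "sum q I \<le> 1"
  shows "(\<Sum>i\<in>I. q i * m i)\<^sup>2 \<le> (\<Sum>i\<in>I. q i * (m i)\<^sup>2)"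
proof -
  have "(\<Sum>i\<in>I. q i * m i)\<^sup>2 = (\<Sum>i\<in>I. sqrt (q i) * (sqrt (q i) * m i))\<^sup>2"
    using assms(1) by (simp add: mult.assoc[symmetric] cong: sum.cong)
  also have "\<dots> \<le> (\<Sum>i\<in>I. (sqrt (q i))\<^sup>2) * (\<Sum>i\<in>I. (sqrt (q i) * m i)\<^sup>2)"
    by (rule Cauchy_Schwarz_ineq_sum)
  also have "\<dots> = sum q I * (\<Sum>i\<in>I. q i * (m i)\<^sup>2)"
    using assms(1) by (simp add: power_mult_distrib cong: sum.cong)
  also have "\<dots> \<le> (\<Sum>i\<in>I. q i * (m i)\<^sup>2)"
    using assms by (intro mult_left_le_one_le sum_nonneg) auto
  finally show ?thesis .
qed

lemma diag_row_square_le: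
  fixes A :: "real^'n^'m" and M :: "real^'n^'n"
  assumes "is_diag M" and "\<forall>i j. A $ i $ j \<ge> 0" and "\<forall>i. x $ i \<ge> 0" and "(A *v x) $ j \<le> 1"
  shows "((A *v (M *v x)) $ j)\<^sup>2 \<le> (A *v ((M ** M) *v x)) $ j"
proof -
  have "((A *v (M *v x)) $ j)\<^sup>2 = (\<Sum>i\<in>UNIV. (A $ j $ i * x $ i) * M $ i $ i)\<^sup>2"
    unfolding matrix_vector_mult_component[of A] is_diag_mult_vec[OF assms(1)] by (simp add: mult_ac)
  also have "\<dots> \<le> (\<Sum>i\<in>UNIV. (A $ j $ i * x $ i) * (M $ i $ i)\<^sup>2)"
    using assms(2-4) by (intro weighted_square_le) (auto simp: matrix_vector_mult_component)
  also have "\<dots> = (A *v ((M ** M) *v x)) $ j"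
    unfolding matrix_vector_mult_component[of A] matrix_vector_mul_assoc[symmetric]
      is_diag_mult_vec[OF assms(1)] by (simp add: power2_eq_square mult_ac)
  finally show ?thesis .
qed

lemma transpose_mult_vec_inner: "(transpose A *v p) \<bullet> v = p \<bullet> (A *v v)"
  for A :: "real^'n^'m"
  by (simp add: dot_lmul_matrix)

lemma smax_diag_step:
  fixes A :: "real^'n^'m" and M :: "real^'n^'n"
  assumes "\<eta> > 0" and A: "\<forall>i j. A $ i $ j \<ge> 0" and x: "\<forall>i. x $ i \<ge> 0"
    and Ax: "\<forall>j. (A *v x) $ j \<le> 1" and M: "is_diag M" and AMx: "\<forall>j. (A *v (M *v x)) $ j \<le> 1"
  shows "smax \<eta> (A *v (x + \<eta> *\<^sub>R (M *v x)))
    \<le> smax \<eta> (A *v x) + \<eta> * ((transpose A *v grad_smax \<eta> (A *v x)) \<bullet> (M *v x + (M ** M) *v x))"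
proof -
  define p where "p = grad_smax \<eta> (A *v x)"
  define a where "a = A *v (M *v x)"
  define b where "b = A *v ((M ** M) *v x)"
  have shift: "A *v (x + \<eta> *\<^sub>R (M *v x)) = A *v x + \<eta> *\<^sub>R a"
    by (simp add: a_def matrix_vector_right_distrib matrix_vector_mult_scaleR)
  have "(\<eta> *\<^sub>R a) $ j \<le> \<eta>" for j
    using \<open>\<eta> > 0\<close> AMx by (simp add: a_def)
  then have step: "smax \<eta> (A *v (x + \<eta> *\<^sub>R (M *v x)))
      \<le> smax \<eta> (A *v x) + p \<bullet> (\<eta> *\<^sub>R a + (\<chi> j. ((\<eta> *\<^sub>R a) $ j)\<^sup>2 / \<eta>))"
    unfolding shift p_def by (rule smax_add_le[OF \<open>\<eta> > 0\<close>])
  have "p \<bullet> (\<eta> *\<^sub>R a + (\<chi> j. ((\<eta> *\<^sub>R a) $ j)\<^sup>2 / \<eta>)) = \<eta> * (\<Sum>j\<in>UNIV. p $ j * (a $ j + (a $ j)\<^sup>2))"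
    using \<open>\<eta> > 0\<close> by (simp add: inner_vec_def sum_distrib_left power2_eq_square field_simps)
  also have "\<dots> \<le> \<eta> * (\<Sum>j\<in>UNIV. p $ j * (a $ j + b $ j))"
    using \<open>\<eta> > 0\<close> diag_row_square_le[OF M A x] Ax
    by (intro mult_left_mono sum_mono) (simp_all add: a_def b_def p_def grad_smax_pos less_imp_le)
  also have "(\<Sum>j\<in>UNIV. p $ j * (a $ j + b $ j)) = (transpose A *v p) \<bullet> (M *v x + (M ** M) *v x)"
    unfolding transpose_mult_vec_inner by (simp add: inner_vec_def a_def b_def matrix_vector_right_distrib)
  finally show ?thesis using step unfolding p_def by linarith
qed

lemma truncated_step_le: "t * (max (1 - t) 0 + (max (1 - t) 0)\<^sup>2) \<le> max (1 - t) 0"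
  for t :: real
proof (cases "t \<le> 1")
  case True
  have "t * ((1 - t) + (1 - t)\<^sup>2) = (1 - t) - (1 - t) ^ 3"
    by (simp add: power2_eq_square power3_eq_cube algebra_simps)
  with True show ?thesis by simp
qed simp

lemma diag_step_inner_le:
  fixes g c x :: "real^'n"
  assumes "lam > 0" and c: "\<forall>i. c $ i > 0" and x: "\<forall>i. x $ i \<ge> 0"
  defines "M \<equiv> (\<chi> i j. if i = j then max (1 - lam * (g $ i / c $ i)) 0 else 0) :: real^'n^'n"
  shows "g \<bullet> (M *v x + (M ** M) *v x) \<le> (c \<bullet> (M *v x)) / lam"
proof -
  define f where "f i = max (1 - lam * (g $ i / c $ i)) 0" for i
  have M: "is_diag M" by (simp add: M_def is_diag_def)
  have Mx: "(M *v v) $ i = f i * v $ i" for v i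
    unfolding is_diag_mult_vec[OF M] by (simp add: M_def f_def)
  have "g $ i * (f i + (f i)\<^sup>2) * x $ i \<le> c $ i / lam * f i * x $ i" for i
  proof -
    have "c $ i \<noteq> 0" using c by (metis less_irrefl)
    then have "g $ i * (f i + (f i)\<^sup>2) = c $ i / lam * ((lam * (g $ i / c $ i)) * (f i + (f i)\<^sup>2))"
      using \<open>lam > 0\<close> by (simp add: field_simps)
    also have "\<dots> \<le> c $ i / lam * f i"
      using \<open>lam > 0\<close> c unfolding f_def by (intro mult_left_mono truncated_step_le) (auto intro: less_imp_le)
    finally show ?thesis using x by (intro mult_right_mono) auto
  qed
  then have "(\<Sum>i\<in>UNIV. g $ i * (f i + (f i)\<^sup>2) * x $ i) \<le> (\<Sum>i\<in>UNIV. c $ i / lam * f i * x $ i)"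
    by (rule sum_mono)
  then show ?thesis
    by (simp add: inner_vec_def Mx power2_eq_square sum_divide_distrib algebra_simps
        flip: matrix_vector_mul_assoc)
qed

lemma smax_truncated_step_ratio_le:
  fixes A :: "real^'n^'m" and c :: "real^'n"
  assumes "\<eta> > 0" and A: "\<forall>i j. A $ i $ j \<ge> 0" and x: "\<forall>i. x $ i \<ge> 0"
    and Ax: "\<forall>j. (A *v x) $ j \<le> 1" and lam: "lam > 0" and c: "\<forall>i. c $ i > 0"
  defines "g \<equiv> transpose A *v grad_smax \<eta> (A *v x)"
  defines "M \<equiv> (\<chi> i j. if i = j then max (1 - lam * (g $ i / c $ i)) 0 else 0) :: real^'n^'n"
  assumes AMx: "\<forall>j. (A *v (M *v x)) $ j \<le> 1"
  shows "(smax \<eta> (A *v (x + \<eta> *\<^sub>R (M *v x))) - smax \<eta> (A *v x)) / (c \<bullet> (\<eta> *\<^sub>R (M *v x)))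
    \<le> 1 / lam"
proof -
  have M: "is_diag M" by (simp add: M_def is_diag_def)
  have "0 \<le> (M *v x) $ i" for i
    unfolding is_diag_mult_vec[OF M] using x by (simp add: M_def)
  then have cd_nonneg: "0 \<le> c \<bullet> (\<eta> *\<^sub>R (M *v x))"
    unfolding inner_vec_def using \<open>\<eta> > 0\<close> c by (intro sum_nonneg) (simp add: less_imp_le)
  have "smax \<eta> (A *v (x + \<eta> *\<^sub>R (M *v x))) - smax \<eta> (A *v x) \<le> \<eta> * (g \<bullet> (M *v x + (M ** M) *v x))"
    using smax_diag_step[OF \<open>\<eta> > 0\<close> A x Ax M AMx] unfolding g_def by simp
  also have "\<dots> \<le> \<eta> * ((c \<bullet> (M *v x)) / lam)"
    using \<open>\<eta> > 0\<close> diag_step_inner_le[OF lam c x, where g = g, folded M_def]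
    by (intro mult_left_mono) simp_all
  finally have "smax \<eta> (A *v (x + \<eta> *\<^sub>R (M *v x))) - smax \<eta> (A *v x) \<le> (c \<bullet> (\<eta> *\<^sub>R (M *v x))) / lam"
    by simp
  moreover have "\<Delta> / D \<le> 1 / lam" if "\<Delta> \<le> D / lam" and "0 \<le> D" for \<Delta> D :: real
    \<comment> \<open>for \<open>D = 0\<close> the quotient is \<open>0\<close> by the convention \<open>x / 0 = 0\<close>\<close>
    using that lam by (cases "D = 0") (simp_all add: pos_divide_le_eq)
  ultimately show ?thesis
    using cd_nonneg by blast
qed

lemma infnorm_mult_vec_scaleR_div:
  fixes A :: "real^'n^'m"
  shows "\<eta> > 0 \<Longrightarrow> infnorm (A *v (\<eta> *\<^sub>R v)) / \<eta> = infnorm (A *v v)"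
  by (simp add: matrix_vector_mult_scaleR infnorm_mul)

theorem corollary2p3:
  fixes \<eta> :: real and A :: "real^'n^'m" and x :: "real^'n"
  assumes eta_pos: "\<eta> > 0"
    and A_nonneg: "\<forall>i j. A $ i $ j \<ge> 0"
    and x_nonneg: "\<forall>i. x $ i \<ge> 0"
    and Ax_bound: "infnorm (A *v x) \<le> 1"
  shows "(\<forall>M :: real^'n^'n.
            is_diag M \<and> loewner_le M (mat 1) \<and>
            infnorm (A *v (\<eta> *\<^sub>R (M *v x))) / \<eta> \<le> 1/2 \<longrightarrow>
            smax \<eta> (A *v (x + \<eta> *\<^sub>R (M *v x)))
              \<le> smax \<eta> (A *v x)
                 + \<eta> * ((transpose A *v grad_smax \<eta> (A *v x)) \<bullet> (M *v x + (M ** M) *v x)))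
       \<and> (\<forall>(lam::real) (c::real^'n).
            lam > 0 \<and> (\<forall>i. c $ i > 0) \<longrightarrow>
            (let M = (\<chi> i j. if i = j
                             then max (1 - lam * (((transpose A *v grad_smax \<eta> (A *v x)) $ i) / c $ i)) 0
                             else 0) :: real^'n^'n;
                 d = \<eta> *\<^sub>R (M *v x)
             in infnorm (A *v d) / \<eta> \<le> 1/2 \<longrightarrow>
                (smax \<eta> (A *v (x + d)) - smax \<eta> (A *v x)) / (c \<bullet> d) \<le> 1 / lam))"
proof -
  have components_le: "\<forall>j. v $ j \<le> 1" if "infnorm v \<le> 1" for v :: "real^'m"
    using that component_le_infnorm_cart[of v] by (meson abs_le_D1 order_trans)
  have Ax: "\<forall>j. (A *v x) $ j \<le> 1"
    using Ax_bound by (rule components_le)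
  have rows: "\<forall>j. (A *v v) $ j \<le> 1" if "infnorm (A *v (\<eta> *\<^sub>R v)) / \<eta> \<le> 1/2" for v
    using that eta_pos components_le[of "A *v v"] by (simp add: infnorm_mult_vec_scaleR_div)
  show ?thesis
  proof (intro conjI allI impI, goal_cases)
    case (1 M)
    then show ?case
      using smax_diag_step[OF eta_pos A_nonneg x_nonneg Ax] rows by blast
  next
    case (2 lam c)
    then show ?case
      using smax_truncated_step_ratio_le[OF eta_pos A_nonneg x_nonneg Ax] rows
      by (simp add: Let_def)
  qed
qed

end
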